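(* For any continuous function $f:[0,1]^d\to[-1,1]$ and any $\varepsilon>0$, there exist $n\in\mathbb{N}$ and a PQC $W_b(\bm{x})$ with width $O(d\log n)$, depth $O(dn^d\log n)$ and number of trainable parameters $O(dn^d)$ such that $$|f(\bm{x})-f_{W_b}(\bm{x})|\le\varepsilon\quad\text{for all }\bm{x}\in[0,1]^d,$$ where $f_{W_b}(\bm{x}):=\langle 0|W_b^\dagger(\bm{x})Z^{(0)}W_b(\bm{x})|0\rangle$ and $Z^{(0)}$ is the Pauli $Z$ observable on the first qubit.
   Context: A parameterized quantum circuit (PQC) with input $\bm{x}=(x_1,\dots,x_d)$ is a quantum circuit on some number of qubits built from CNOT gates, Hadamard gates and single-qubit gates, where the single-qubit gates are either Pauli rotations $R_X(\theta)=e^{-i\theta X/2}$, $R_Y(\theta)$, $R_Z(\theta)=e^{-i\theta Z/2}$ whose angles $\theta$ are trainable real parameters not depending on $\bm{x}$, or data-encoding gates depending on one coordinate $x_j\in[-1,1]$, namely $S(x_j)=e^{i\arccos(x_j)X}=\begin{pmatrix} x_j & i\sqrt{1-x_j^2}\\ i\sqrt{1-x_j^2} & x_j\end{pmatrix}$. Width = number of qubits, depth = circuit depth, number of parameters = number of trainable angles. $|0\rangle$ is the all-zeros state. Asymptotic bounds hold with absolute constants. *)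

theory Defs
  imports "HOL-Analysis.Analysis"
begin

(* Quantum states on w qubits: amplitude vectors indexed by basis states
   i < 2^w; qubit q corresponds to bit q of the index (qubit 0 = first qubit). *)
type_synonym qstate = "nat \<Rightarrow> complex"

(* A 2x2 matrix: m row col, with row/column index False ~ |0>, True ~ |1>. *)
type_synonym mat2 = "bool \<Rightarrow> bool \<Rightarrow> complex"

(* Gates.  RX q k : rotation R_X(theta k) on qubit q, where theta is the
   vector of trainable parameters and k the index of the parameter used.
   Enc q j : data-encoding gate S(x_j) on qubit q. *)
datatype gate =
    CNOT nat nat   (* control, target *)
  | Had nat
  | RX nat nat
  | RY nat nat
  | RZ nat nat
  | Enc nat nat

definition apply1 :: "mat2 \<Rightarrow> nat \<Rightarrow> qstate \<Rightarrow> qstate" where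
  "apply1 m q \<psi> = (\<lambda>i. m (bit i q) False * \<psi> (unset_bit q i)
                        + m (bit i q) True * \<psi> (set_bit q i))"

definition apply_cnot :: "nat \<Rightarrow> nat \<Rightarrow> qstate \<Rightarrow> qstate" where
  "apply_cnot c t \<psi> = (\<lambda>i. \<psi> (if bit i c then flip_bit t i else i))"

definition rx_mat :: "real \<Rightarrow> mat2" where
  "rx_mat \<theta> = (\<lambda>r c. if r = c then complex_of_real (cos (\<theta>/2))
                     else - \<i> * complex_of_real (sin (\<theta>/2)))"

definition ry_mat :: "real \<Rightarrow> mat2" where
  "ry_mat \<theta> = (\<lambda>r c. if r = c then complex_of_real (cos (\<theta>/2))
                     else if r then complex_of_real (sin (\<theta>/2))
                     else - complex_of_real (sin (\<theta>/2)))"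

definition rz_mat :: "real \<Rightarrow> mat2" where
  "rz_mat \<theta> = (\<lambda>r c. if r \<noteq> c then 0
                     else if r then exp (\<i> * complex_of_real (\<theta>/2))
                     else exp (- \<i> * complex_of_real (\<theta>/2)))"

definition had_mat :: mat2 where
  "had_mat = (\<lambda>r c. if r \<and> c then - complex_of_real (1 / sqrt 2)
                   else complex_of_real (1 / sqrt 2))"

(* S(x) = exp(i arccos(x) X) = [[x, i sqrt(1-x^2)], [i sqrt(1-x^2), x]] *)
definition enc_mat :: "real \<Rightarrow> mat2" where
  "enc_mat x = (\<lambda>r c. if r = c then complex_of_real x
                     else \<i> * complex_of_real (sqrt (1 - x\<^sup>2)))"

primrec gate_sem :: "(nat \<Rightarrow> real) \<Rightarrow> (nat \<Rightarrow> real) \<Rightarrow> gate \<Rightarrow> qstate \<Rightarrow> qstate" where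
  "gate_sem \<theta> x (CNOT c t) = apply_cnot c t"
| "gate_sem \<theta> x (Had q) = apply1 had_mat q"
| "gate_sem \<theta> x (RX q k) = apply1 (rx_mat (\<theta> k)) q"
| "gate_sem \<theta> x (RY q k) = apply1 (ry_mat (\<theta> k)) q"
| "gate_sem \<theta> x (RZ q k) = apply1 (rz_mat (\<theta> k)) q"
| "gate_sem \<theta> x (Enc q j) = apply1 (enc_mat (x j)) q"

primrec gate_qubits :: "gate \<Rightarrow> nat set" where
  "gate_qubits (CNOT c t) = {c, t}"
| "gate_qubits (Had q) = {q}"
| "gate_qubits (RX q k) = {q}"
| "gate_qubits (RY q k) = {q}"
| "gate_qubits (RZ q k) = {q}"
| "gate_qubits (Enc q j) = {q}"

primrec gate_params :: "gate \<Rightarrow> nat set" where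
  "gate_params (CNOT c t) = {}"
| "gate_params (Had q) = {}"
| "gate_params (RX q k) = {k}"
| "gate_params (RY q k) = {k}"
| "gate_params (RZ q k) = {k}"
| "gate_params (Enc q j) = {}"

definition valid_gate :: "nat \<Rightarrow> nat \<Rightarrow> gate \<Rightarrow> bool" where
  "valid_gate w d g \<longleftrightarrow> (\<forall>q\<in>gate_qubits g. q < w)
     \<and> (\<forall>c t. g = CNOT c t \<longrightarrow> c \<noteq> t)
     \<and> (\<forall>q j. g = Enc q j \<longrightarrow> j < d)"

(* A circuit is a list of layers (applied in list order); each layer is a list of
   gates acting on pairwise disjoint qubits.  Depth = number of layers. *)
definition valid_circuit :: "nat \<Rightarrow> nat \<Rightarrow> gate list list \<Rightarrow> bool" where
  "valid_circuit w d layers \<longleftrightarrow> 0 < w \<and>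
     (\<forall>L\<in>set layers. (\<forall>g\<in>set L. valid_gate w d g) \<and>
        (\<forall>i<length L. \<forall>j<length L. i \<noteq> j \<longrightarrow> gate_qubits (L!i) \<inter> gate_qubits (L!j) = {}))"

definition circuit_depth :: "gate list list \<Rightarrow> nat" where
  "circuit_depth layers = length layers"

definition num_params :: "gate list list \<Rightarrow> nat" where
  "num_params layers = card (\<Union>L\<in>set layers. \<Union>g\<in>set L. gate_params g)"

definition init_state :: qstate where
  "init_state = (\<lambda>i. if i = 0 then 1 else 0)"

definition run_circuit :: "(nat \<Rightarrow> real) \<Rightarrow> (nat \<Rightarrow> real) \<Rightarrow> gate list list \<Rightarrow> qstate" where
  "run_circuit \<theta> x layers =
     foldl (\<lambda>\<psi> L. foldl (\<lambda>\<phi> g. gate_sem \<theta> x g \<phi>) \<psi> L) init_state layers"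

definition expect_Z0 :: "nat \<Rightarrow> qstate \<Rightarrow> real" where
  "expect_Z0 w \<psi> = (\<Sum>i<2^w. (if bit i 0 then -1 else 1) * (cmod (\<psi> i))\<^sup>2)"

definition pqc_fn :: "nat \<Rightarrow> (nat \<Rightarrow> real) \<Rightarrow> gate list list \<Rightarrow> (nat \<Rightarrow> real) \<Rightarrow> real" where
  "pqc_fn w \<theta> layers x = expect_Z0 w (run_circuit \<theta> x layers)"

definition unit_cube :: "nat \<Rightarrow> (nat \<Rightarrow> real) set" where
  "unit_cube d = {x. \<forall>j. (j < d \<longrightarrow> 0 \<le> x j \<and> x j \<le> 1) \<and> (d \<le> j \<longrightarrow> x j = 0)}"

end

theory Submission
  imports Defs
begin

(* Data qubit k (qubit k + 1) is prepared by S(x_j), j = k div N, so each coordinate is loaded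
   into a block of N qubits and a readout of the data register yields independent bits, each 0
   with probability x_j^2.  A uniformly controlled R_Y rotation of the ancilla (qubit 0) by
   arccos f(node b) on the branch b makes <Z> on the ancilla the expectation of f at the random
   node (sqrt (Z_1/N), ..., sqrt (Z_d/N)), where Z_j ~ Binomial(N, x_j^2) counts the zeros of
   block j: a Bernstein-type operator in the variables x_j^2.  Chebyshev's inequality for the Z_j
   and uniform continuity of f make it epsilon-close to f for large N.  The circuit has dN + 1
   qubits, fewer than 4 * 2^(dN) gates and 2^(dN) parameters, which are the claimed bounds for
   n = 2^(dN + 1). *)

section \<open>Uniform continuity on the unit cube\<close>

lemma dist_fun_le_of_components:
  fixes x y :: "nat \<Rightarrow> 'a::metric_space"
  assumes "\<And>j. dist (x j) (y j) \<le> \<eta>"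
  shows "dist x y \<le> 2 * \<eta>"
proof -
  have geom: "summable (\<lambda>n. (1/2::real)^n)" "(\<Sum>n. (1/2::real)^n) = 2"
    using suminf_geometric[of "1/2::real"] by (auto simp: summable_geometric_iff)
  have "dist x y \<le> (\<Sum>n. (1/2)^n * \<eta>)"
    unfolding dist_fun_def
  proof (rule suminf_le)
    show "summable (\<lambda>n. (1/2)^n * \<eta>)" using geom(1) by (rule summable_mult2)
    show "summable (\<lambda>n. (1/2::real)^n * min (dist (x (from_nat n)) (y (from_nat n))) 1)"
      by (rule summable_comparison_test'[OF geom(1)]) auto
  qed (auto intro!: mult_left_mono simp: assms min.coboundedI1)
  also have "\<dots> = 2 * \<eta>" using suminf_mult2[OF geom(1), of \<eta>] geom(2) by simp
  finally show ?thesis .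
qed

lemma unit_cube_eq_PiE: "unit_cube d = PiE UNIV (\<lambda>j. if j < d then {0..1} else {0})"
  unfolding unit_cube_def PiE_UNIV_domain Pi_iff by (force split: if_splits)

lemma compact_unit_cube: "compact (unit_cube d)"
proof -
  have "compactin (product_topology (\<lambda>_. euclidean) UNIV)
      (PiE UNIV (\<lambda>j. if j < d then {0..1} else {0::real}))"
    by (subst compactin_PiE) auto
  then show ?thesis unfolding unit_cube_eq_PiE euclidean_product_topology by simp
qed

lemma unit_cube_coordinates: "x \<in> unit_cube d \<Longrightarrow> 0 \<le> x j \<and> x j \<le> 1"
  by (cases "j < d") (auto simp: unit_cube_def)

lemma uniform_modulus_unit_cube:
  fixes f :: "(nat \<Rightarrow> real) \<Rightarrow> real"
  assumes "continuous_on (unit_cube d) f" "0 < \<epsilon>"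
  obtains \<eta> where "0 < \<eta>"
    "\<And>x z. x \<in> unit_cube d \<Longrightarrow> z \<in> unit_cube d \<Longrightarrow> (\<forall>j<d. \<bar>x j - z j\<bar> \<le> \<eta>) \<Longrightarrow> \<bar>f x - f z\<bar> \<le> \<epsilon>"
proof -
  obtain \<delta> where \<delta>: "0 < \<delta>"
    "\<And>x z. x \<in> unit_cube d \<Longrightarrow> z \<in> unit_cube d \<Longrightarrow> dist z x < \<delta> \<Longrightarrow> dist (f z) (f x) < \<epsilon>"
    using compact_uniformly_continuous[OF assms(1) compact_unit_cube] assms(2)
    unfolding uniformly_continuous_on_def by metis
  show thesis
  proof
    show "0 < \<delta>/3" using \<delta>(1) by simp
    fix x z assume x: "x \<in> unit_cube d" and z: "z \<in> unit_cube d"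
      and close: "\<forall>j<d. \<bar>x j - z j\<bar> \<le> \<delta>/3"
    have "dist (x j) (z j) \<le> \<delta>/3" for j
      using close x z \<delta>(1) by (cases "j < d") (auto simp: unit_cube_def dist_real_def)
    then have "dist x z < \<delta>" using dist_fun_le_of_components[of x z "\<delta>/3"] \<delta>(1) by simp
    then show "\<bar>f x - f z\<bar> \<le> \<epsilon>" using \<delta>(2)[OF z x] by (simp add: dist_real_def dist_commute)
  qed
qed

section \<open>Product states\<close>

lemma set_bit_less_exp_iff: "q < w \<Longrightarrow> set_bit q (n::nat) < 2^w \<longleftrightarrow> n < 2^w"
  by (metis take_bit_nat_eq_self_iff take_bit_set_bit_eq not_le bit_set_bit_iff bit_take_bit_iff
      bit_eq_iff)

lemma unset_bit_less_exp_iff: "q < w \<Longrightarrow> unset_bit q (n::nat) < 2^w \<longleftrightarrow> n < 2^w"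
  by (metis take_bit_nat_eq_self_iff take_bit_unset_bit_eq not_le bit_unset_bit_iff bit_take_bit_iff
      bit_eq_iff)

definition mat_vec :: "mat2 \<Rightarrow> (bool \<Rightarrow> complex) \<Rightarrow> bool \<Rightarrow> complex" where
  "mat_vec M v = (\<lambda>r. M r False * v False + M r True * v True)"

definition ket0 :: "bool \<Rightarrow> complex" where
  "ket0 = (\<lambda>b. if b then 0 else 1)"

definition prod_state :: "nat \<Rightarrow> (nat \<Rightarrow> bool \<Rightarrow> complex) \<Rightarrow> qstate" where
  "prod_state w v = (\<lambda>i. if i < 2^w then (\<Prod>q<w. v q (bit i q)) else 0)"

lemma prod_state_cong: "(\<And>q. q < w \<Longrightarrow> v q = v' q) \<Longrightarrow> prod_state w v = prod_state w v'"
  unfolding prod_state_def by (intro ext if_cong prod.cong) auto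

lemma apply1_prod_state:
  assumes "q < w"
  shows "apply1 M q (prod_state w v) = prod_state w (v(q := mat_vec M (v q)))"
proof
  fix i :: nat
  have split: "(\<Prod>r<w. g r :: complex) = g q * (\<Prod>r\<in>{..<w}-{q}. g r)" for g
    using assms by (intro prod.remove) auto
  have "(\<Prod>r<w. v r (bit (set_bit q i) r)) = v q True * (\<Prod>r\<in>{..<w}-{q}. v r (bit i r))"
    "(\<Prod>r<w. v r (bit (unset_bit q i) r)) = v q False * (\<Prod>r\<in>{..<w}-{q}. v r (bit i r))"
    "(\<Prod>r<w. (v(q := u)) r (bit i r)) = u (bit i q) * (\<Prod>r\<in>{..<w}-{q}. v r (bit i r))" for u
    by (subst split; auto simp: bit_set_bit_iff bit_unset_bit_iff intro!: prod.cong)+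
  then show "apply1 M q (prod_state w v) i = prod_state w (v(q := mat_vec M (v q))) i"
    using assms by (simp add: apply1_def prod_state_def set_bit_less_exp_iff unset_bit_less_exp_iff
        mat_vec_def algebra_simps)
qed

lemma init_state_eq_prod_state: "init_state = prod_state w (\<lambda>_. ket0)"
proof
  fix i :: nat
  show "init_state i = prod_state w (\<lambda>_. ket0) i"
  proof (cases "i = 0")
    case False
    then obtain q where q: "bit i q" using bit_eqI[of i 0] by auto
    have "(\<Prod>r<w. ket0 (bit i r)) = 0" if "i < 2^w"
    proof -
      have "q < w" using q that by (metis bit_take_bit_iff take_bit_nat_eq_self_iff)
      then show ?thesis using q by (intro prod_zero) (auto simp: ket0_def)
    qed
    then show ?thesis using False by (simp add: init_state_def prod_state_def)
  qed (simp add: init_state_def prod_state_def ket0_def)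
qed

lemma prod_state_Suc:
  "prod_state (Suc m) v = (\<lambda>i. prod_state m (\<lambda>k. v (Suc k)) (i div 2) * v 0 (odd i))"
proof
  fix i :: nat
  have "i < 2^Suc m \<longleftrightarrow> i div 2 < 2^m" by (simp add: div_less_iff_less_mult mult.commute)
  then show "prod_state (Suc m) v i = prod_state m (\<lambda>k. v (Suc k)) (i div 2) * v 0 (odd i)"
    unfolding prod_state_def
    by (simp only: prod.lessThan_Suc_shift bit_0 bit_Suc) (simp add: mult.commute)
qed

abbreviation run_gates :: "(nat \<Rightarrow> real) \<Rightarrow> (nat \<Rightarrow> real) \<Rightarrow> qstate \<Rightarrow> gate list \<Rightarrow> qstate" where
  "run_gates \<theta> x \<equiv> foldl (\<lambda>\<psi> g. gate_sem \<theta> x g \<psi>)"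

lemma run_circuit_singleton_layers:
  "run_circuit \<theta> x (map (\<lambda>g. [g]) gs) = run_gates \<theta> x init_state gs"
  by (simp add: run_circuit_def foldl_map)

definition encoding_gates :: "nat \<Rightarrow> nat \<Rightarrow> gate list" where
  "encoding_gates N m = map (\<lambda>k. Enc (Suc k) (k div N)) [0..<m]"

lemma run_encoding_gates:
  assumes "m' \<le> m"
  shows "run_gates \<theta> x (prod_state (Suc m) v) (encoding_gates N m') = prod_state (Suc m)
    (\<lambda>q. if 0 < q \<and> q \<le> m' then mat_vec (enc_mat (x ((q - 1) div N))) (v q) else v q)"
  using assms
proof (induction m')
  case (Suc m')
  have "run_gates \<theta> x (prod_state (Suc m) v) (encoding_gates N (Suc m'))
    = apply1 (enc_mat (x (m' div N))) (Suc m') (prod_state (Suc m)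
        (\<lambda>q. if 0 < q \<and> q \<le> m' then mat_vec (enc_mat (x ((q - 1) div N))) (v q) else v q))"
    using Suc by (simp add: encoding_gates_def)
  also have "\<dots> = prod_state (Suc m)
      (\<lambda>q. if 0 < q \<and> q \<le> Suc m' then mat_vec (enc_mat (x ((q - 1) div N))) (v q) else v q)"
    using Suc.prems by (subst apply1_prod_state) (auto intro!: prod_state_cong simp: le_Suc_eq)
  finally show ?case .
qed (auto simp: encoding_gates_def intro!: prod_state_cong)

section \<open>Uniformly controlled rotations\<close>

definition branched_state :: "(nat \<Rightarrow> complex) \<Rightarrow> (nat \<Rightarrow> bool \<Rightarrow> complex) \<Rightarrow> qstate" where
  "branched_state P T = (\<lambda>i. P (i div 2) * T (i div 2) (odd i))"

definition flip_if :: "bool \<Rightarrow> (bool \<Rightarrow> complex) \<Rightarrow> bool \<Rightarrow> complex" where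
  "flip_if p v = (if p then v \<circ> Not else v)"

lemma apply1_0_branched_state:
  "apply1 M 0 (branched_state P T) = branched_state P (\<lambda>b. mat_vec M (T b))"
  by (rule ext)
    (simp add: branched_state_def apply1_def unset_bit_0 set_bit_0 bit_0 mat_vec_def algebra_simps)

lemma apply_cnot_branched_state:
  "apply_cnot (Suc c) 0 (branched_state P T) = branched_state P (\<lambda>b. flip_if (bit b c) (T b))"
  by (rule ext) (simp add: branched_state_def apply_cnot_def flip_bit_0 bit_Suc flip_if_def)

lemma ry_mat_add: "mat_vec (ry_mat a) (mat_vec (ry_mat c) v) = mat_vec (ry_mat (a + c)) v"
proof
  fix r :: bool
  have half_angle_sum:
    "complex_of_real (cos ((a + c)/2)) = cos (a/2) * cos (c/2) - sin (a/2) * sin (c/2)"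
    "complex_of_real (sin ((a + c)/2)) = sin (a/2) * cos (c/2) + cos (a/2) * sin (c/2)"
    using cos_add[of "a/2" "c/2"] sin_add[of "a/2" "c/2"] by (simp_all add: add_divide_distrib)
  show "mat_vec (ry_mat a) (mat_vec (ry_mat c) v) r = mat_vec (ry_mat (a + c)) v r"
    by (cases r) (simp_all only: mat_vec_def ry_mat_def half_angle_sum if_True if_False simp_thms,
        simp_all add: algebra_simps)
qed

lemma flip_if_ry_mat:
  "flip_if p (mat_vec (ry_mat a) (flip_if p v)) = mat_vec (ry_mat (if p then - a else a)) v"
  by (rule ext) (auto simp: flip_if_def mat_vec_def ry_mat_def)

fun ucry_gates :: "nat \<Rightarrow> nat \<Rightarrow> gate list" where
  "ucry_gates 0 s = [RY 0 s]"
| "ucry_gates (Suc m) s =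
    ucry_gates m s @ [CNOT (Suc m) 0] @ ucry_gates m (s + 2^m) @ [CNOT (Suc m) 0]"

(* X R_Y(a) X = R_Y(-a): between the two CNOTs the second half acts with the angle negated on the
   branches whose top control bit is set, so half-sums and half-differences of phi over that bit
   produce R_Y(phi b) on every branch b. *)
fun ucry_angles :: "nat \<Rightarrow> (nat \<Rightarrow> real) \<Rightarrow> nat \<Rightarrow> nat \<Rightarrow> real" where
  "ucry_angles 0 \<phi> s = (\<lambda>k. \<phi> 0)"
| "ucry_angles (Suc m) \<phi> s = (\<lambda>k.
    if k < s + 2^m then ucry_angles m (\<lambda>b. (\<phi> b + \<phi> (b + 2^m)) / 2) s k
    else ucry_angles m (\<lambda>b. (\<phi> b - \<phi> (b + 2^m)) / 2) (s + 2^m) k)"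

lemma mod_exp_Suc_eq: "(b::nat) mod 2^Suc m = b mod 2^m + (if bit b m then 2^m else 0)"
  using take_bit_Suc_from_most[of m b] by (simp add: take_bit_eq_mod)

lemma run_ucry_gates:
  assumes "\<And>k. s \<le> k \<Longrightarrow> k < s + 2^m \<Longrightarrow> \<theta> k = ucry_angles m \<phi> s k"
  shows "run_gates \<theta> x (branched_state P T) (ucry_gates m s)
    = branched_state P (\<lambda>b. mat_vec (ry_mat (\<phi> (b mod 2^m))) (T b))"
  using assms
proof (induction m arbitrary: \<phi> s T)
  case 0
  then show ?case by (simp add: apply1_0_branched_state)
next
  case (Suc m)
  define u where "u = (\<lambda>b. (\<phi> b + \<phi> (b + 2^m)) / 2)"
  define v where "v = (\<lambda>b. (\<phi> b - \<phi> (b + 2^m)) / 2)"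
  have first_half: "run_gates \<theta> x (branched_state P T) (ucry_gates m s)
      = branched_state P (\<lambda>b. mat_vec (ry_mat (u (b mod 2^m))) (T b))"
    using Suc.IH[of s u] Suc.prems by (simp add: u_def)
  have second_half: "run_gates \<theta> x (branched_state P T') (ucry_gates m (s + 2^m))
      = branched_state P (\<lambda>b. mat_vec (ry_mat (v (b mod 2^m))) (T' b))" for T'
    using Suc.IH[of "s + 2^m" v] Suc.prems by (simp add: v_def)
  have angle:
    "(if bit b m then - v (b mod 2^m) else v (b mod 2^m)) + u (b mod 2^m) = \<phi> (b mod 2^Suc m)" for b
    unfolding mod_exp_Suc_eq u_def v_def by (cases "bit b m") (simp_all add: field_simps)
  have "run_gates \<theta> x (branched_state P T) (ucry_gates (Suc m) s)
      = apply_cnot (Suc m) 0 (run_gates \<theta> x (apply_cnot (Suc m) 0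
          (run_gates \<theta> x (branched_state P T) (ucry_gates m s))) (ucry_gates m (s + 2^m)))"
    by simp
  also have "\<dots> = branched_state P (\<lambda>b. flip_if (bit b m) (mat_vec (ry_mat (v (b mod 2^m)))
      (flip_if (bit b m) (mat_vec (ry_mat (u (b mod 2^m))) (T b)))))"
    by (simp only: first_half second_half apply_cnot_branched_state)
  also have "\<dots> = branched_state P (\<lambda>b. mat_vec (ry_mat (\<phi> (b mod 2^Suc m))) (T b))"
    by (simp only: flip_if_ry_mat ry_mat_add angle)
  finally show ?case .
qed

section \<open>The function computed by the circuit\<close>

definition bernoulli_weight :: "(nat \<Rightarrow> real) \<Rightarrow> nat \<Rightarrow> nat \<Rightarrow> real" where
  "bernoulli_weight y m b = (\<Prod>k<m. if bit b k then 1 - y k else y k)"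

lemma sum_lessThan_double: "(\<Sum>i<2 * n. F i) = (\<Sum>b<n. F (2 * b) + F (2 * b + 1 :: nat))"
  by (induction n) (simp_all add: sum.distrib ac_simps)

lemma expect_Z0_branched_state:
  "expect_Z0 (Suc m) (branched_state P T)
    = (\<Sum>b<2^m. (cmod (P b))\<^sup>2 * ((cmod (T b False))\<^sup>2 - (cmod (T b True))\<^sup>2))"
  unfolding expect_Z0_def branched_state_def power_Suc sum_lessThan_double
  by (intro sum.cong) (simp_all add: bit_0 norm_mult power_mult_distrib algebra_simps)

lemma norm_prod_state_enc_ket0:
  assumes "\<And>k. \<bar>y k\<bar> \<le> 1" "b < 2^m"
  shows "(cmod (prod_state m (\<lambda>k. mat_vec (enc_mat (y k)) ket0) b))\<^sup>2
    = bernoulli_weight (\<lambda>k. (y k)\<^sup>2) m b"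
proof -
  have "(cmod (mat_vec (enc_mat (y k)) ket0 t))\<^sup>2 = (if t then 1 - (y k)\<^sup>2 else (y k)\<^sup>2)" for k t
  proof -
    have "(y k)\<^sup>2 \<le> 1" using assms(1)[of k] by (simp add: abs_square_le_1)
    then show ?thesis by (simp add: mat_vec_def enc_mat_def ket0_def norm_mult)
  qed
  then show ?thesis
    using assms(2)
    by (simp add: prod_state_def bernoulli_weight_def prod_norm[symmetric] prod_power_distrib)
qed

lemma Z_expectation_ry_ket0:
  "(cmod (mat_vec (ry_mat a) ket0 False))\<^sup>2 - (cmod (mat_vec (ry_mat a) ket0 True))\<^sup>2 = cos a"
  using cos_double[of "a/2"] by (simp add: mat_vec_def ry_mat_def ket0_def)

definition bernstein_circuit :: "nat \<Rightarrow> nat \<Rightarrow> gate list list" where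
  "bernstein_circuit N m = map (\<lambda>g. [g]) (encoding_gates N m @ ucry_gates m 0)"

lemma pqc_fn_bernstein_circuit:
  assumes "\<And>j. \<bar>x j\<bar> \<le> 1"
  shows "pqc_fn (Suc m) (ucry_angles m \<phi> 0) (bernstein_circuit N m) x
    = (\<Sum>b<2^m. bernoulli_weight (\<lambda>k. (x (k div N))\<^sup>2) m b * cos (\<phi> b))"
proof -
  define \<theta> where "\<theta> = ucry_angles m \<phi> 0"
  define P where "P = prod_state m (\<lambda>k. mat_vec (enc_mat (x (k div N))) ket0)"
  have "run_gates \<theta> x init_state (encoding_gates N m)
      = prod_state (Suc m)
          (\<lambda>q. if 0 < q \<and> q \<le> m then mat_vec (enc_mat (x ((q - 1) div N))) ket0 else ket0)"
    unfolding init_state_eq_prod_state[of "Suc m"] by (rule run_encoding_gates) simp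
  also have "\<dots> = branched_state P (\<lambda>_. ket0)"
    unfolding prod_state_Suc P_def branched_state_def by (simp cong: prod_state_cong)
  finally have encoded:
    "run_gates \<theta> x init_state (encoding_gates N m) = branched_state P (\<lambda>_. ket0)" .
  have "run_circuit \<theta> x (bernstein_circuit N m)
      = branched_state P (\<lambda>b. mat_vec (ry_mat (\<phi> (b mod 2^m))) ket0)"
    unfolding bernstein_circuit_def run_circuit_singleton_layers foldl_append encoded
    by (rule run_ucry_gates) (simp add: \<theta>_def)
  then have "pqc_fn (Suc m) \<theta> (bernstein_circuit N m) x
      = (\<Sum>b<2^m. (cmod (P b))\<^sup>2 * cos (\<phi> (b mod 2^m)))"
    by (simp add: pqc_fn_def expect_Z0_branched_state Z_expectation_ry_ket0)
  then show ?thesis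
    using norm_prod_state_enc_ket0[of "\<lambda>k. x (k div N)"] assms by (simp add: P_def \<theta>_def)
qed

section \<open>Independent Bernoulli bits\<close>

lemma bernoulli_weight_double:
  "bernoulli_weight y (Suc m) (2 * b) = y 0 * bernoulli_weight (\<lambda>k. y (Suc k)) m (b::nat)"
  "bernoulli_weight y (Suc m) (2 * b + 1) = (1 - y 0) * bernoulli_weight (\<lambda>k. y (Suc k)) m b"
  unfolding bernoulli_weight_def prod.lessThan_Suc_shift by (simp_all add: bit_0 bit_Suc)

lemma sum_bernoulli_weight: "(\<Sum>b<2^m. bernoulli_weight y m b) = 1"
proof (induction m arbitrary: y)
  case (Suc m)
  then show ?case
    unfolding power_Suc sum_lessThan_double bernoulli_weight_double
    by (simp add: algebra_simps sum.distrib sum_distrib_left[symmetric])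
qed (simp add: bernoulli_weight_def)

lemma bernoulli_weight_nonneg: "(\<And>k. 0 \<le> y k \<and> y k \<le> 1) \<Longrightarrow> 0 \<le> bernoulli_weight y m b"
  unfolding bernoulli_weight_def by (intro prod_nonneg) auto

lemma bernoulli_weighted_variance:
  "(\<Sum>b<2^m. bernoulli_weight y m b * (\<Sum>k<m. a k * (of_bool (\<not> bit b k) - y k))\<^sup>2)
    = (\<Sum>k<m. (a k)\<^sup>2 * y k * (1 - y k))"
proof (induction m arbitrary: a y)
  case (Suc m)
  define W where "W = bernoulli_weight (\<lambda>k. y (Suc k)) m"
  define D where "D = (\<lambda>b::nat. \<Sum>k<m. a (Suc k) * (of_bool (\<not> bit b k) - y (Suc k)))"
  have deviation: "(\<Sum>k<Suc m. a k * (of_bool (\<not> bit (2 * b) k) - y k)) = a 0 * (1 - y 0) + D b"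
    "(\<Sum>k<Suc m. a k * (of_bool (\<not> bit (2 * b + 1) k) - y k)) = - a 0 * y 0 + D b" for b :: nat
    unfolding D_def sum.lessThan_Suc_shift by (simp_all add: bit_0 bit_Suc)
  have centred: "y 0 * (a 0 * (1 - y 0) + D b)\<^sup>2 + (1 - y 0) * (- a 0 * y 0 + D b)\<^sup>2
      = (D b)\<^sup>2 + (a 0)\<^sup>2 * y 0 * (1 - y 0)" for b
    by (simp add: power2_eq_square algebra_simps)
  have "(\<Sum>b<2^Suc m. bernoulli_weight y (Suc m) b * (\<Sum>k<Suc m. a k * (of_bool (\<not> bit b k) - y k))\<^sup>2)
      = (\<Sum>b<2^m. W b * (y 0 * (a 0 * (1 - y 0) + D b)\<^sup>2 + (1 - y 0) * (- a 0 * y 0 + D b)\<^sup>2))"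
    unfolding power_Suc[of 2] sum_lessThan_double bernoulli_weight_double deviation W_def[symmetric]
    by (intro sum.cong) (simp_all add: algebra_simps)
  also have "\<dots> = (\<Sum>b<2^m. W b * (D b)\<^sup>2) + (a 0)\<^sup>2 * y 0 * (1 - y 0) * (\<Sum>b<2^m. W b)"
    unfolding centred
    by (simp add: distrib_left sum.distrib sum_distrib_left sum_distrib_right mult.commute)
  also have "\<dots> = (\<Sum>k<Suc m. (a k)\<^sup>2 * y k * (1 - y k))"
    unfolding W_def D_def Suc.IH sum_bernoulli_weight sum.lessThan_Suc_shift by simp
  finally show ?case .
qed simp

lemma weighted_chebyshev:
  fixes w X :: "'a \<Rightarrow> real"
  assumes "\<And>b. b \<in> B \<Longrightarrow> 0 \<le> w b" "0 < \<tau>"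
  shows "(\<Sum>b\<in>B. w b * of_bool (\<tau> \<le> \<bar>X b\<bar>)) \<le> (\<Sum>b\<in>B. w b * (X b)\<^sup>2) / \<tau>\<^sup>2"
proof -
  have "of_bool (\<tau> \<le> \<bar>X b\<bar>) \<le> (X b)\<^sup>2 / \<tau>\<^sup>2" for b
  proof (cases "\<tau> \<le> \<bar>X b\<bar>")
    case True
    then have "\<tau>\<^sup>2 \<le> (X b)\<^sup>2" using assms(2) by (metis abs_le_square_iff abs_of_pos)
    then show ?thesis using True assms(2) by simp
  qed simp
  then have "(\<Sum>b\<in>B. w b * of_bool (\<tau> \<le> \<bar>X b\<bar>)) \<le> (\<Sum>b\<in>B. w b * ((X b)\<^sup>2 / \<tau>\<^sup>2))"
    using assms(1) by (intro sum_mono mult_left_mono) auto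
  then show ?thesis by (simp add: sum_divide_distrib)
qed

section \<open>The Bernstein-type approximation\<close>

lemma abs_sqrt_diff_le_sqrt_abs_diff:
  fixes a c :: real
  assumes "0 \<le> a" "0 \<le> c"
  shows "\<bar>sqrt a - sqrt c\<bar> \<le> sqrt \<bar>a - c\<bar>"
proof -
  have ordered: "(sqrt a - sqrt c)\<^sup>2 \<le> \<bar>a - c\<bar>" if "0 \<le> c" "c \<le> a" for a c :: real
  proof -
    have "sqrt c * sqrt c \<le> sqrt a * sqrt c" using that by (intro mult_right_mono) auto
    then show ?thesis using that by (simp add: power2_diff)
  qed
  then have "(sqrt a - sqrt c)\<^sup>2 \<le> \<bar>a - c\<bar>"
    using ordered[of c a] ordered[of a c] assms by (metis abs_minus_commute power2_commute nle_le)
  then show ?thesis by (metis real_sqrt_abs real_sqrt_le_mono)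
qed

lemma sum_block_indicator:
  fixes g :: "nat \<Rightarrow> real"
  assumes "j < d"
  shows "(\<Sum>k<d * N. of_bool (k div N = j) * g k) = (\<Sum>t<N. g (t + j * N))"
proof -
  have "(\<Sum>k<d * N. of_bool (k div N = j) * g k) = (\<Sum>i<d. of_bool (i = j) * (\<Sum>t<N. g (t + i * N)))"
    unfolding sum_mult_product sum_distrib_left by (intro sum.cong refl) auto
  also have "\<dots> = (\<Sum>t<N. g (t + j * N))"
    using assms by (simp add: sum.remove[of "{..<d}" j])
  finally show ?thesis .
qed

definition block_zeros :: "nat \<Rightarrow> nat \<Rightarrow> nat \<Rightarrow> real" where
  "block_zeros N b j = (\<Sum>t<N. of_bool (\<not> bit b (t + j * N)))"

definition bernstein_node :: "nat \<Rightarrow> nat \<Rightarrow> nat \<Rightarrow> nat \<Rightarrow> real" where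
  "bernstein_node d N b = (\<lambda>j. if j < d then sqrt (block_zeros N b j / real N) else 0)"

definition bernstein_approx :: "nat \<Rightarrow> nat \<Rightarrow> ((nat \<Rightarrow> real) \<Rightarrow> real) \<Rightarrow> (nat \<Rightarrow> real) \<Rightarrow> real" where
  "bernstein_approx d N f x =
    (\<Sum>b<2^(d*N). bernoulli_weight (\<lambda>k. (x (k div N))\<^sup>2) (d*N) b * f (bernstein_node d N b))"

lemma block_zeros_le: "block_zeros N b j \<le> N"
  unfolding block_zeros_def by (rule order_trans[OF sum_mono[where g = "\<lambda>_. 1"]]) auto

lemma bernstein_node_in_unit_cube: "bernstein_node d N b \<in> unit_cube d"
  using block_zeros_le[of N b] by (auto simp: unit_cube_def bernstein_node_def block_zeros_def
      divide_le_eq_1 sum_nonneg)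

definition atypical_block :: "nat \<Rightarrow> real \<Rightarrow> (nat \<Rightarrow> real) \<Rightarrow> nat \<Rightarrow> nat \<Rightarrow> bool" where
  "atypical_block N \<eta> x b j \<longleftrightarrow> real N * \<eta>\<^sup>2 \<le> \<bar>block_zeros N b j - real N * (x j)\<^sup>2\<bar>"

lemma block_zeros_chebyshev:
  assumes "0 < N" "0 < \<eta>" "x \<in> unit_cube d" "j < d"
  shows "(\<Sum>b<2^(d*N). bernoulli_weight (\<lambda>k. (x (k div N))\<^sup>2) (d*N) b
      * of_bool (atypical_block N \<eta> x b j)) \<le> 1 / (4 * real N * \<eta>^4)"
proof -
  define y where "y = (\<lambda>k. (x (k div N))\<^sup>2)"
  define c where "c = (x j)\<^sup>2"
  have y: "0 \<le> y k \<and> y k \<le> 1" for k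
    using unit_cube_coordinates[OF assms(3)] by (simp add: y_def power_le_one)
  have deviation: "block_zeros N b j - real N * c
      = (\<Sum>k<d*N. of_bool (k div N = j) * (of_bool (\<not> bit b k) - y k))" for b
    unfolding sum_block_indicator[OF assms(4)] block_zeros_def y_def c_def using assms(1)
    by (simp add: sum_subtractf)
  have block_y: "y (t + j * N) = c" if "t < N" for t
    using that by (simp add: y_def c_def)
  have "(\<Sum>b<2^(d*N). bernoulli_weight y (d*N) b * (block_zeros N b j - real N * c)\<^sup>2)
      = (\<Sum>k<d*N. of_bool (k div N = j) * (y k * (1 - y k)))"
    unfolding deviation bernoulli_weighted_variance by (intro sum.cong) auto
  also have "\<dots> = real N * c * (1 - c)"
    unfolding sum_block_indicator[OF assms(4)] by (simp add: block_y)
  finally have variance: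
    "(\<Sum>b<2^(d*N). bernoulli_weight y (d*N) b * (block_zeros N b j - real N * c)\<^sup>2)
      = real N * c * (1 - c)" .
  have "(\<Sum>b<2^(d*N). bernoulli_weight y (d*N) b
        * of_bool (real N * \<eta>\<^sup>2 \<le> \<bar>block_zeros N b j - real N * c\<bar>))
      \<le> real N * c * (1 - c) / (real N * \<eta>\<^sup>2)\<^sup>2"
    unfolding variance[symmetric]
    by (rule weighted_chebyshev) (use bernoulli_weight_nonneg[of y, OF y] assms(1,2) in auto)
  also have "\<dots> = c * (1 - c) / (real N * \<eta>^4)"
    using assms(1) by (simp add: power2_eq_square power4_eq_xxxx)
  also have "\<dots> \<le> (1/4) / (real N * \<eta>^4)"
  proof -
    have "c * (1 - c) \<le> 1/4"
      using zero_le_power2[of "c - 1/2"] by (simp add: power2_eq_square algebra_simps)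
    then show ?thesis using assms(1,2) by (intro divide_right_mono) auto
  qed
  finally show ?thesis by (simp add: atypical_block_def y_def c_def)
qed

lemma bernstein_node_close:
  assumes "0 < N" "0 < \<eta>" "x \<in> unit_cube d" "j < d" "\<not> atypical_block N \<eta> x b j"
  shows "\<bar>x j - bernstein_node d N b j\<bar> \<le> \<eta>"
proof -
  define z where "z = block_zeros N b j / real N"
  have "0 \<le> z" by (simp add: z_def block_zeros_def sum_nonneg)
  have "\<bar>z - (x j)\<^sup>2\<bar> < \<eta>\<^sup>2"
    using assms(1,5) by (simp add: z_def atypical_block_def not_le abs_less_iff field_simps)
  then have "sqrt \<bar>z - (x j)\<^sup>2\<bar> \<le> \<eta>"
    using assms(2) by (metis real_sqrt_abs real_sqrt_le_mono abs_of_pos less_imp_le)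
  then have "\<bar>sqrt z - sqrt ((x j)\<^sup>2)\<bar> \<le> \<eta>"
    using abs_sqrt_diff_le_sqrt_abs_diff[OF \<open>0 \<le> z\<close>, of "(x j)\<^sup>2"] by simp
  then show ?thesis
    using unit_cube_coordinates[OF assms(3), of j] assms(4)
    by (simp add: z_def bernstein_node_def abs_minus_commute)
qed

lemma bernstein_node_error:
  fixes f :: "(nat \<Rightarrow> real) \<Rightarrow> real"
  assumes "0 < N" "0 < \<eta>"
    and modulus: "\<And>x z. x \<in> unit_cube d \<Longrightarrow> z \<in> unit_cube d \<Longrightarrow>
      (\<forall>j<d. \<bar>x j - z j\<bar> \<le> \<eta>) \<Longrightarrow> \<bar>f x - f z\<bar> \<le> \<delta>"
    and range: "f ` unit_cube d \<subseteq> {-1..1}"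
    and x: "x \<in> unit_cube d"
  shows "\<bar>f x - f (bernstein_node d N b)\<bar> \<le> \<delta> + 2 * (\<Sum>j<d. of_bool (atypical_block N \<eta> x b j))"
proof (cases "\<exists>j<d. atypical_block N \<eta> x b j")
  case True
  then obtain j where "j < d" "atypical_block N \<eta> x b j" by blast
  then have "1 \<le> (\<Sum>j<d. of_bool (atypical_block N \<eta> x b j) :: real)"
    using member_le_sum[of j "{..<d}" "\<lambda>j. of_bool (atypical_block N \<eta> x b j) :: real"] by simp
  moreover have "f x \<in> {-1..1}" "f (bernstein_node d N b) \<in> {-1..1}"
    using range x bernstein_node_in_unit_cube[of d N b] by auto
  moreover have "0 \<le> \<delta>" using modulus[OF x x] assms(2) by simp
  ultimately show ?thesis by auto
next
  case False
  then have "\<forall>j<d. \<bar>x j - bernstein_node d N b j\<bar> \<le> \<eta>"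
    using bernstein_node_close[OF assms(1,2) x] by blast
  then show ?thesis
    using modulus[OF x bernstein_node_in_unit_cube] by (simp add: sum_nonneg add_increasing2)
qed

lemma bernstein_error:
  fixes f :: "(nat \<Rightarrow> real) \<Rightarrow> real"
  assumes "0 < N" "0 < \<eta>"
    and modulus: "\<And>x z. x \<in> unit_cube d \<Longrightarrow> z \<in> unit_cube d \<Longrightarrow>
      (\<forall>j<d. \<bar>x j - z j\<bar> \<le> \<eta>) \<Longrightarrow> \<bar>f x - f z\<bar> \<le> \<delta>"
    and range: "f ` unit_cube d \<subseteq> {-1..1}"
    and x: "x \<in> unit_cube d"
  shows "\<bar>f x - bernstein_approx d N f x\<bar> \<le> \<delta> + real d / (2 * real N * \<eta>^4)"
proof -
  define W where "W = bernoulli_weight (\<lambda>k. (x (k div N))\<^sup>2) (d*N)"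
  define far where "far = (\<lambda>j b. of_bool (atypical_block N \<eta> x b j) :: real)"
  have W_nonneg: "0 \<le> W b" for b
    unfolding W_def using unit_cube_coordinates[OF x]
    by (intro bernoulli_weight_nonneg) (simp add: power_le_one)
  have pointwise: "\<bar>f x - f (bernstein_node d N b)\<bar> \<le> \<delta> + 2 * (\<Sum>j<d. far j b)" for b
    unfolding far_def by (rule bernstein_node_error[OF assms])
  have "\<bar>f x - bernstein_approx d N f x\<bar> = \<bar>\<Sum>b<2^(d*N). W b * (f x - f (bernstein_node d N b))\<bar>"
    using sum_bernoulli_weight[of "\<lambda>k. (x (k div N))\<^sup>2" "d*N"]
    by (simp add: bernstein_approx_def W_def right_diff_distrib sum_subtractf
        sum_distrib_right[symmetric])
  also have "\<dots> \<le> (\<Sum>b<2^(d*N). W b * (\<delta> + 2 * (\<Sum>j<d. far j b)))"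
    by (rule order_trans[OF sum_abs sum_mono])
      (simp add: abs_mult W_nonneg mult_left_mono pointwise)
  also have "\<dots> = \<delta> * (\<Sum>b<2^(d*N). W b) + 2 * (\<Sum>b<2^(d*N). \<Sum>j<d. W b * far j b)"
    by (simp add: distrib_left sum.distrib sum_distrib_left mult.left_commute mult.commute[of _ \<delta>])
  also have "\<dots> = \<delta> + 2 * (\<Sum>j<d. \<Sum>b<2^(d*N). W b * far j b)"
    unfolding W_def sum_bernoulli_weight sum.swap[of _ "{..<2^(d*N)}"] by simp
  also have "\<dots> \<le> \<delta> + 2 * (\<Sum>j<d. 1 / (4 * real N * \<eta>^4))"
  proof -
    have "(\<Sum>j<d. \<Sum>b<2^(d*N). W b * far j b) \<le> (\<Sum>j<d. 1 / (4 * real N * \<eta>^4))"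
      unfolding W_def far_def by (intro sum_mono block_zeros_chebyshev[OF assms(1,2) x]) simp
    then show ?thesis by linarith
  qed
  also have "\<dots> = \<delta> + real d / (2 * real N * \<eta>^4)" by simp
  finally show ?thesis .
qed

lemma exists_bernstein_approximation:
  fixes f :: "(nat \<Rightarrow> real) \<Rightarrow> real"
  assumes "continuous_on (unit_cube d) f" "f ` unit_cube d \<subseteq> {-1..1}" "0 < \<epsilon>"
  obtains N where "0 < N" "\<And>x. x \<in> unit_cube d \<Longrightarrow> \<bar>f x - bernstein_approx d N f x\<bar> \<le> \<epsilon>"
proof -
  obtain \<eta> where \<eta>: "0 < \<eta>" and modulus: "\<And>x z. x \<in> unit_cube d \<Longrightarrow> z \<in> unit_cube d \<Longrightarrow>
      (\<forall>j<d. \<bar>x j - z j\<bar> \<le> \<eta>) \<Longrightarrow> \<bar>f x - f z\<bar> \<le> \<epsilon>/2"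
    using uniform_modulus_unit_cube[OF assms(1), of "\<epsilon>/2"] assms(3) by auto
  define N where "N = nat \<lceil>real d / (\<epsilon> * \<eta>^4)\<rceil> + 1"
  have "0 < N" by (simp add: N_def)
  have "real d / (\<epsilon> * \<eta>^4) \<le> real N"
    unfolding N_def using real_nat_ceiling_ge[of "real d / (\<epsilon> * \<eta>^4)"] by simp
  then have bound: "real d / (2 * real N * \<eta>^4) \<le> \<epsilon>/2"
    using \<open>0 < N\<close> \<eta> assms(3) by (simp add: field_simps)
  show thesis
  proof (rule that[OF \<open>0 < N\<close>])
    fix x assume "x \<in> unit_cube d"
    have "\<bar>f x - bernstein_approx d N f x\<bar> \<le> \<epsilon>/2 + real d / (2 * real N * \<eta>^4)"
      by (rule bernstein_error[OF \<open>0 < N\<close> \<eta> _ assms(2) \<open>x \<in> unit_cube d\<close>]) (fact modulus)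
    with bound show "\<bar>f x - bernstein_approx d N f x\<bar> \<le> \<epsilon>" by linarith
  qed
qed

lemma bernstein_circuit_approximation:
  fixes f :: "(nat \<Rightarrow> real) \<Rightarrow> real"
  assumes cont: "continuous_on (unit_cube d) f" and range: "f ` unit_cube d \<subseteq> {-1..1}"
    and "0 < \<epsilon>"
  obtains N where "0 < N" "\<forall>x\<in>unit_cube d. \<bar>f x - pqc_fn (Suc (d*N))
    (ucry_angles (d*N) (\<lambda>b. arccos (f (bernstein_node d N b))) 0) (bernstein_circuit N (d*N)) x\<bar> \<le> \<epsilon>"
proof -
  obtain N where "0 < N" and approx: "\<And>x. x \<in> unit_cube d \<Longrightarrow> \<bar>f x - bernstein_approx d N f x\<bar> \<le> \<epsilon>"
    using exists_bernstein_approximation[OF cont range \<open>0 < \<epsilon>\<close>] by blast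
  have "pqc_fn (Suc (d*N)) (ucry_angles (d*N) (\<lambda>b. arccos (f (bernstein_node d N b))) 0)
      (bernstein_circuit N (d*N)) x = bernstein_approx d N f x"
    if "x \<in> unit_cube d" for x
  proof -
    have "\<bar>x j\<bar> \<le> 1" for j using unit_cube_coordinates[OF that, of j] by simp
    moreover have "cos (arccos (f (bernstein_node d N b))) = f (bernstein_node d N b)" for b
      using range bernstein_node_in_unit_cube[of d N b] by (intro cos_arccos) auto
    ultimately show ?thesis by (simp add: pqc_fn_bernstein_circuit bernstein_approx_def)
  qed
  with \<open>0 < N\<close> approx show thesis by (intro that) auto
qed

section \<open>Resources\<close>

lemma ucry_gates_cases:
  "g \<in> set (ucry_gates m s) \<Longrightarrow> (\<exists>k. g = RY 0 k \<and> s \<le> k \<and> k < s + 2^m) \<or> (\<exists>c<m. g = CNOT (Suc c) 0)"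
proof (induction m arbitrary: s)
  case (Suc m)
  then consider "g \<in> set (ucry_gates m s)" | "g \<in> set (ucry_gates m (s + 2^m))"
    | "g = CNOT (Suc m) 0"
    by auto
  then show ?case
    using Suc.IH[of s] Suc.IH[of "s + 2^m"] by cases fastforce+
qed simp

lemma length_ucry_gates: "length (ucry_gates m s) + 2 = 3 * 2^m"
  by (induction m arbitrary: s) auto

lemma valid_bernstein_circuit: "valid_circuit (Suc (d*N)) d (bernstein_circuit N (d*N))"
proof -
  have "valid_gate (Suc (d*N)) d g" if "g \<in> set (encoding_gates N (d*N) @ ucry_gates (d*N) 0)" for g
  proof -
    from that consider "g \<in> set (encoding_gates N (d*N))" | "g \<in> set (ucry_gates (d*N) 0)" by auto
    then show ?thesis
    proof cases
      case 1
      then obtain k where "k < d*N" "g = Enc (Suc k) (k div N)" by (auto simp: encoding_gates_def)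
      moreover from \<open>k < d*N\<close> have "k div N < d" by (simp add: less_mult_imp_div_less)
      ultimately show ?thesis by (simp add: valid_gate_def)
    qed (use ucry_gates_cases in \<open>fastforce simp: valid_gate_def\<close>)
  qed
  then show ?thesis by (auto simp: valid_circuit_def bernstein_circuit_def)
qed

lemma depth_bernstein_circuit: "circuit_depth (bernstein_circuit N m) + 2 = m + 3 * 2^m"
  using length_ucry_gates[of m 0]
  by (simp add: circuit_depth_def bernstein_circuit_def encoding_gates_def)

lemma num_params_bernstein_circuit: "num_params (bernstein_circuit N m) \<le> 2^m"
proof -
  have "(\<Union>L\<in>set (bernstein_circuit N m). \<Union>g\<in>set L. gate_params g) \<subseteq> {..<2^m}"
    using ucry_gates_cases[of _ m 0] by (fastforce simp: bernstein_circuit_def encoding_gates_def)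
  then show ?thesis unfolding num_params_def by (metis card_lessThan card_mono finite_lessThan)
qed

lemma bernstein_circuit_resources:
  assumes "1 \<le> d" "0 < N"
  defines "n \<equiv> 2 ^ Suc (d*N) :: nat"
  shows "real (Suc (d*N)) \<le> real d * log 2 (real n)"
    and "real (circuit_depth (bernstein_circuit N (d*N))) \<le> real d * real n ^ d * log 2 (real n)"
    and "real (num_params (bernstein_circuit N (d*N))) \<le> real d * real n ^ d"
proof -
  have log_n: "log 2 (real n) = real (Suc (d*N))"
    unfolding n_def of_nat_power of_nat_numeral by (rule log_pow_cancel) auto
  have "1 \<le> d*N" using assms(1,2) by simp
  have "n \<le> n ^ d" using assms(1) by (intro self_le_power) (auto simp: n_def)
  show "real (Suc (d*N)) \<le> real d * log 2 (real n)"
    unfolding log_n using mult_right_mono[of 1 "real d" "real (Suc (d*N))"] assms(1) by simp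
  have "circuit_depth (bernstein_circuit N (d*N)) \<le> 2 * n"
  proof -
    have "d*N < 2^(d*N)" "2 * n = 4 * 2^(d*N)" by (rule less_exp) (simp add: n_def)
    then show ?thesis using depth_bernstein_circuit[of N "d*N"] by linarith
  qed
  also have "\<dots> \<le> n ^ d * Suc (d*N)"
    using mult_le_mono[OF \<open>n \<le> n ^ d\<close>, of 2 "Suc (d*N)"] \<open>1 \<le> d*N\<close> by (simp add: mult.commute)
  also have "\<dots> \<le> d * n ^ d * Suc (d*N)"
    using assms(1) by (intro mult_le_mono) auto
  finally show
    "real (circuit_depth (bernstein_circuit N (d*N))) \<le> real d * real n ^ d * log 2 (real n)"
    unfolding log_n by (metis of_nat_le_iff of_nat_mult of_nat_power)
  have "num_params (bernstein_circuit N (d*N)) \<le> n"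
    using num_params_bernstein_circuit[of N "d*N"] by (simp add: n_def)
  also have "\<dots> \<le> d * n ^ d"
    using \<open>n \<le> n ^ d\<close> assms(1) by (metis le_trans mult_1 mult_le_mono1)
  finally show "real (num_params (bernstein_circuit N (d*N))) \<le> real d * real n ^ d"
    by (metis of_nat_le_iff of_nat_mult of_nat_power)
qed

theorem theorem1:
  shows "\<exists>C>0. \<forall>(d::nat) (f::(nat \<Rightarrow> real) \<Rightarrow> real) (\<epsilon>::real).
     1 \<le> d \<longrightarrow> continuous_on (unit_cube d) f \<longrightarrow> f ` unit_cube d \<subseteq> {-1..1} \<longrightarrow> 0 < \<epsilon> \<longrightarrow>
     (\<exists>(n::nat) (w::nat) (layers::gate list list) (\<theta>::nat \<Rightarrow> real).
        2 \<le> n \<and> valid_circuit w d layers \<and>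
        real w \<le> C * real d * log 2 (real n) \<and>
        real (circuit_depth layers) \<le> C * real d * real n ^ d * log 2 (real n) \<and>
        real (num_params layers) \<le> C * real d * real n ^ d \<and>
        (\<forall>x\<in>unit_cube d. \<bar>f x - pqc_fn w \<theta> layers x\<bar> \<le> \<epsilon>))"
proof (rule exI[of _ 1], intro conjI allI impI)
  fix d :: nat and f :: "(nat \<Rightarrow> real) \<Rightarrow> real" and \<epsilon> :: real
  assume d: "1 \<le> d" and cont: "continuous_on (unit_cube d) f"
    and range: "f ` unit_cube d \<subseteq> {-1..1}" and \<epsilon>: "0 < \<epsilon>"
  obtain N where N: "0 < N" and approx: "\<forall>x\<in>unit_cube d. \<bar>f x - pqc_fn (Suc (d*N))
      (ucry_angles (d*N) (\<lambda>b. arccos (f (bernstein_node d N b))) 0) (bernstein_circuit N (d*N)) x\<bar> \<le> \<epsilon>"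
    using bernstein_circuit_approximation[OF cont range \<epsilon>] by blast
  show "\<exists>n w layers \<theta>. 2 \<le> n \<and> valid_circuit w d layers \<and>
        real w \<le> 1 * real d * log 2 (real n) \<and>
        real (circuit_depth layers) \<le> 1 * real d * real n ^ d * log 2 (real n) \<and>
        real (num_params layers) \<le> 1 * real d * real n ^ d \<and>
        (\<forall>x\<in>unit_cube d. \<bar>f x - pqc_fn w \<theta> layers x\<bar> \<le> \<epsilon>)"
    by (rule exI[of _ "2 ^ Suc (d*N)"], rule exI[of _ "Suc (d*N)"],
        rule exI[of _ "bernstein_circuit N (d*N)"],
        rule exI[of _ "ucry_angles (d*N) (\<lambda>b. arccos (f (bernstein_node d N b))) 0"])
      (use approx valid_bernstein_circuit bernstein_circuit_resources[OF d N] in simp)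
qed simp

end
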